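(* Let $N\in\{1,2,3,4\}$, let $\omega_1,\dots,\omega_N\in S\oplus V$ be linearly independent over $\mathbb{R}$, $L=\{\sum_{\alpha=1}^N2k_\alpha\omega_\alpha: k\in\mathbb{Z}^N\}$, $\{w_p\}_{p\ge1}$ an enumeration of $L\setminus\{0\}$, and $$\zeta_N(x)=x^{-1}+\sum_{p=1}^\infty\Big\{(x-w_p)^{-1}+\sum_{\mu=0}^{N-1}(w_p^{-1}x)^\mu w_p^{-1}\Big\},\quad x\in(S\oplus V)\setminus L.$$ Then $\zeta_N$ takes its values in $S\oplus V$, and $\zeta_N(-x)=-\zeta_N(x)$ for all $x\in(S\oplus V)\setminus L$.
   Context: $\mathbb{R}_{0,3}$ is the real Clifford algebra generated by $e_1,e_2,e_3$ with $e_ie_j+e_je_i=-2\delta_{ij}$; $e_0=1$. $S\oplus V\subset\mathbb{R}_{0,3}$ is the set of paravectors $x=x_0+\sum_{j=1}^3x_je_j$; for $x\ne0$, $x^{-1}=\bar x/|x|^2$ with $\bar x=x_0-\sum_jx_je_j$, $|x|^2=\sum x_i^2$. *)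

theory Defs
  imports Complex_Main
begin

text \<open>Elements of the real Clifford algebra R_{0,3} are represented as coefficient
functions on blades: a multivector a is a function from finite subsets A of {1,2,3}
to reals, a A being the coefficient of e_A = e_{a1} ... e_{ak} (a1 < ... < ak),
e_{} = 1. Coefficients outside Pow {1,2,3} are irrelevant (and are zero for all
multivectors constructed below).\<close>

type_synonym mv = "nat set \<Rightarrow> real"

definition mzero :: mv where "mzero = (\<lambda>_. 0)"
definition mone :: mv where "mone = (\<lambda>A. if A = {} then 1 else 0)"
definition madd :: "mv \<Rightarrow> mv \<Rightarrow> mv" where "madd a b = (\<lambda>A. a A + b A)"
definition msub :: "mv \<Rightarrow> mv \<Rightarrow> mv" where "msub a b = (\<lambda>A. a A - b A)"
definition mneg :: "mv \<Rightarrow> mv" where "mneg a = (\<lambda>A. - a A)"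

text \<open>Sign of the blade product e_A e_B = bsign A B * e_{A symdiff B},
using e_i e_j = - e_j e_i (i \<noteq> j) and e_i e_i = -1.\<close>
definition bsign :: "nat set \<Rightarrow> nat set \<Rightarrow> real" where
  "bsign A B = (-1) ^ (card {(i, j). i \<in> A \<and> j \<in> B \<and> j < i} + card (A \<inter> B))"

definition mmul :: "mv \<Rightarrow> mv \<Rightarrow> mv" where
  "mmul a b = (\<lambda>C. \<Sum>A\<in>Pow {1,2,3}. \<Sum>B\<in>Pow {1,2,3}.
      if (A - B) \<union> (B - A) = C then bsign A B * a A * b B else 0)"

primrec mpow :: "mv \<Rightarrow> nat \<Rightarrow> mv" where
  "mpow a 0 = mone"
| "mpow a (Suc n) = mmul (mpow a n) a"

definition paravector :: "mv \<Rightarrow> bool" where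
  "paravector x \<longleftrightarrow> (\<forall>A. A \<notin> {{}, {1}, {2}, {3}} \<longrightarrow> x A = 0)"

definition pconj :: "mv \<Rightarrow> mv" where
  "pconj x = (\<lambda>A. if A = {} then x A else - x A)"

definition pnormsq :: "mv \<Rightarrow> real" where
  "pnormsq x = x {} ^ 2 + x {1} ^ 2 + x {2} ^ 2 + x {3} ^ 2"

definition pinv :: "mv \<Rightarrow> mv" where
  "pinv x = (\<lambda>A. pconj x A / pnormsq x)"

definition lattice :: "nat \<Rightarrow> (nat \<Rightarrow> mv) \<Rightarrow> mv set" where
  "lattice N \<omega> = {y. \<exists>k :: nat \<Rightarrow> int. y = (\<lambda>C. \<Sum>\<alpha>\<in>{1..N}. 2 * of_int (k \<alpha>) * \<omega> \<alpha> C)}"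

definition zterm :: "nat \<Rightarrow> (nat \<Rightarrow> mv) \<Rightarrow> mv \<Rightarrow> nat \<Rightarrow> mv" where
  "zterm N w x p = (\<lambda>C. pinv (msub x (w p)) C +
      (\<Sum>\<mu><N. mmul (mpow (mmul (pinv (w p)) x) \<mu>) (pinv (w p)) C))"

definition zeta :: "nat \<Rightarrow> (nat \<Rightarrow> mv) \<Rightarrow> mv \<Rightarrow> mv" where
  "zeta N w x = (\<lambda>C. pinv x C + (\<Sum>p. zterm N w x (Suc p) C))"

end

theory Submission
  imports Defs "HOL-Analysis.Analysis"
begin

text \<open>Since y (y^-1 x) = x, the summand at a lattice point y telescopes:
  (x - y)^-1 + (sum over mu < N of (y^-1 x)^mu y^-1) = - (y - x)^-1 y (y^-1 x)^N y^-1,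
  which is O(|x|^N / |y|^(N+1)) because the l1 norm of blade coefficients is submultiplicative.
  Linear independence gives |sum of 2 k_alpha omega_alpha| \<ge> e |k_alpha| for every alpha, so
  the sum of |y|^-(N+1) over L - {0} is dominated by a product of N convergent sums
  sum_j (1 + |j|)^-((N+1)/N), and the series converges absolutely. Every summand is a
  paravector: (y^-1 x)^mu y^-1 is a palindromic product of paravectors, hence fixed by
  reversion, and in R_{0,3} reversion fixes exactly the paravectors. Finally the summand is
  odd in (y, x) jointly, and absolute convergence allows reindexing the series by y \<mapsto> -y.\<close>

section \<open>Signs of blade products\<close>

definition inversions :: "nat set \<Rightarrow> nat set \<Rightarrow> nat" where
  "inversions A B = card {(i, j). i \<in> A \<and> j \<in> B \<and> j < i}"

lemma bsign_inversions: "bsign A B = (-1) ^ (inversions A B + card (A \<inter> B))"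
  by (simp add: bsign_def inversions_def)

lemma bsign_empty_left [simp]: "bsign {} B = 1"
  by (simp add: bsign_def)

lemma bsign_empty_right [simp]: "bsign A {} = 1"
  by (simp add: bsign_def)

lemma inversions_Un_left:
  assumes "finite X" "finite Y" "finite D" "X \<inter> Y = {}"
  shows "inversions (X \<union> Y) D = inversions X D + inversions Y D"
proof -
  have "{(i, j). i \<in> X \<union> Y \<and> j \<in> D \<and> j < i} =
      {(i, j). i \<in> X \<and> j \<in> D \<and> j < i} \<union> {(i, j). i \<in> Y \<and> j \<in> D \<and> j < i}"
    by auto
  moreover have "finite {(i, j). i \<in> Z \<and> j \<in> D \<and> j < i}" if "finite Z" for Z
    by (rule finite_subset[of _ "Z \<times> D"]) (use that assms in auto)
  ultimately show ?thesis
    unfolding inversions_def using assms by (subst card_Un_disjoint[symmetric]) auto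
qed

lemma inversions_Un_right:
  assumes "finite X" "finite Y" "finite D" "X \<inter> Y = {}"
  shows "inversions D (X \<union> Y) = inversions D X + inversions D Y"
proof -
  have "{(i, j). i \<in> D \<and> j \<in> X \<union> Y \<and> j < i} =
      {(i, j). i \<in> D \<and> j \<in> X \<and> j < i} \<union> {(i, j). i \<in> D \<and> j \<in> Y \<and> j < i}"
    by auto
  moreover have "finite {(i, j). i \<in> D \<and> j \<in> Z \<and> j < i}" if "finite Z" for Z
    by (rule finite_subset[of _ "D \<times> Z"]) (use that assms in auto)
  ultimately show ?thesis
    unfolding inversions_def using assms by (subst card_Un_disjoint[symmetric]) auto
qed

lemma additive_symdiff:
  fixes f :: "'a set \<Rightarrow> nat"
  assumes additive: "\<And>X Y. finite X \<Longrightarrow> finite Y \<Longrightarrow> X \<inter> Y = {} \<Longrightarrow> f (X \<union> Y) = f X + f Y"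
    and "finite A" "finite B"
  shows "f (sym_diff A B) + 2 * f (A \<inter> B) = f A + f B"
proof -
  have "A = (A - B) \<union> (A \<inter> B)" "B = (B - A) \<union> (A \<inter> B)" by auto
  then have "f A = f (A - B) + f (A \<inter> B)" "f B = f (B - A) + f (A \<inter> B)"
    using additive assms(2,3) by (metis Diff_disjoint Int_Diff finite_Diff finite_Int inf_commute)+
  moreover have "f (sym_diff A B) = f (A - B) + f (B - A)"
    using additive[of "A - B" "B - A"] assms(2,3) by auto
  ultimately show ?thesis by simp
qed

lemma neg_one_power_split: "a + 2 * x = b + c \<Longrightarrow> (-1 :: 'a :: ring_1) ^ a = (-1) ^ b * (-1) ^ c"
  by (metis mult_1_right neg_one_even_power even_mult_iff even_numeral power_add)

lemma neg_one_power_symdiff: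
  fixes f :: "'a set \<Rightarrow> nat"
  assumes "\<And>X Y. finite X \<Longrightarrow> finite Y \<Longrightarrow> X \<inter> Y = {} \<Longrightarrow> f (X \<union> Y) = f X + f Y"
    and "finite A" "finite B"
  shows "(-1 :: real) ^ f (sym_diff A B) = (-1) ^ f A * (-1) ^ f B"
  by (rule neg_one_power_split[OF additive_symdiff[OF assms]])

lemma bsign_cocycle:
  assumes "finite A" "finite B" "finite F"
  shows "bsign A B * bsign (sym_diff A B) F = bsign B F * bsign A (sym_diff B F)"
proof -
  have card_Int_Un: "card ((X \<union> Y) \<inter> Z) = card (X \<inter> Z) + card (Y \<inter> Z)"
    if "finite X" "finite Y" "X \<inter> Y = {}" for X Y Z :: "nat set"
    using that by (simp add: Int_Un_distrib2 card_Un_disjoint disjoint_iff)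
  have "(-1::real) ^ inversions (sym_diff A B) F = (-1) ^ inversions A F * (-1) ^ inversions B F"
    using assms by (intro neg_one_power_symdiff[where f = "\<lambda>X. inversions X F"] inversions_Un_left)
  moreover have "(-1::real) ^ inversions A (sym_diff B F) = (-1) ^ inversions A B * (-1) ^ inversions A F"
    using assms by (intro neg_one_power_symdiff[where f = "inversions A"] inversions_Un_right)
  moreover have "(-1::real) ^ card (sym_diff A B \<inter> F) = (-1) ^ card (A \<inter> F) * (-1) ^ card (B \<inter> F)"
    using assms by (intro neg_one_power_symdiff[where f = "\<lambda>X. card (X \<inter> F)"] card_Int_Un)
  moreover have "(-1::real) ^ card (sym_diff B F \<inter> A) = (-1) ^ card (B \<inter> A) * (-1) ^ card (F \<inter> A)"
    using assms by (intro neg_one_power_symdiff[where f = "\<lambda>X. card (X \<inter> A)"] card_Int_Un)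
  ultimately show ?thesis
    by (simp add: bsign_inversions power_add mult_ac Int_commute)
qed

text \<open>The sign of reversing e_C, i.e. (-1)^(k(k-1)/2) for a k-blade.\<close>

definition reversion_sign :: "nat set \<Rightarrow> real" where
  "reversion_sign C = (-1) ^ inversions C C"

lemma reversion_sign_symdiff:
  assumes "finite A" "finite B"
  shows "reversion_sign (sym_diff A B) * bsign A B = bsign B A * reversion_sign A * reversion_sign B"
proof -
  have "(-1::real) ^ inversions (sym_diff A B) (sym_diff A B)
      = (-1) ^ inversions A (sym_diff A B) * (-1) ^ inversions B (sym_diff A B)"
    using assms by (intro neg_one_power_symdiff[where f = "\<lambda>X. inversions X (sym_diff A B)"]
        inversions_Un_left) auto
  moreover have "(-1::real) ^ inversions A (sym_diff A B) = (-1) ^ inversions A A * (-1) ^ inversions A B"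
    using assms by (intro neg_one_power_symdiff[where f = "inversions A"] inversions_Un_right)
  moreover have "(-1::real) ^ inversions B (sym_diff B A) = (-1) ^ inversions B B * (-1) ^ inversions B A"
    using assms by (intro neg_one_power_symdiff[where f = "inversions B"] inversions_Un_right)
  ultimately show ?thesis
    by (simp add: reversion_sign_def bsign_inversions power_add mult_ac Int_commute Un_commute)
qed

section \<open>The Clifford product\<close>

definition blades :: "nat set set" where
  "blades = Pow {1, 2, 3}"

lemma finite_blades [simp]: "finite blades"
  by (simp add: blades_def)

lemma finite_blade: "A \<in> blades \<Longrightarrow> finite A"
  unfolding blades_def by (auto intro: finite_subset)

lemma symdiff_blade: "A \<in> blades \<Longrightarrow> B \<in> blades \<Longrightarrow> sym_diff A B \<in> blades"
  by (auto simp: blades_def)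

lemma empty_blade [simp]: "{} \<in> blades"
  by (simp add: blades_def)

lemma mmul_blades:
  "mmul a b C = (\<Sum>A\<in>blades. \<Sum>B\<in>blades. if sym_diff A B = C then bsign A B * a A * b B else 0)"
  by (simp add: mmul_def blades_def)

definition blade_supported :: "mv \<Rightarrow> bool" where
  "blade_supported a \<longleftrightarrow> (\<forall>C. C \<notin> blades \<longrightarrow> a C = 0)"

lemma mmul_outside_blades: "C \<notin> blades \<Longrightarrow> mmul a b C = 0"
  unfolding mmul_blades by (auto intro!: sum.neutral dest: symdiff_blade)

lemma blade_supported_mmul: "blade_supported (mmul a b)"
  by (simp add: blade_supported_def mmul_outside_blades)

lemma sum_mmul_mult:
  "(\<Sum>E\<in>blades. mmul a b E * h E) = (\<Sum>A\<in>blades. \<Sum>B\<in>blades. bsign A B * a A * b B * h (sym_diff A B))"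
proof -
  have "(\<Sum>E\<in>blades. mmul a b E * h E)
      = (\<Sum>E\<in>blades. \<Sum>A\<in>blades. \<Sum>B\<in>blades. if sym_diff A B = E then bsign A B * a A * b B * h E else 0)"
    unfolding mmul_blades sum_distrib_right by (intro sum.cong refl) simp
  also have "\<dots> = (\<Sum>A\<in>blades. \<Sum>B\<in>blades. \<Sum>E\<in>blades. if sym_diff A B = E then bsign A B * a A * b B * h E else 0)"
    by (subst sum.swap) (rule sum.cong[OF refl], rule sum.swap)
  also have "\<dots> = (\<Sum>A\<in>blades. \<Sum>B\<in>blades. bsign A B * a A * b B * h (sym_diff A B))"
    by (intro sum.cong refl) (simp add: sum.delta symdiff_blade)
  finally show ?thesis .
qed

lemma mmul_assoc: "mmul (mmul a b) c = mmul a (mmul b c)"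
proof
  fix D
  define h where "h E = (\<Sum>F\<in>blades. if sym_diff E F = D then bsign E F * c F else 0)" for E
  define k where "k A G = (if sym_diff A G = D then bsign A G * a A else 0)" for A G
  have "mmul (mmul a b) c D = (\<Sum>E\<in>blades. mmul a b E * h E)"
    unfolding mmul_blades[of "mmul a b"] h_def sum_distrib_left by (intro sum.cong refl) simp
  also have "\<dots> = (\<Sum>A\<in>blades. \<Sum>B\<in>blades. \<Sum>F\<in>blades.
      if sym_diff (sym_diff A B) F = D then bsign A B * bsign (sym_diff A B) F * a A * b B * c F else 0)"
    unfolding sum_mmul_mult unfolding h_def sum_distrib_left by (intro sum.cong refl) simp
  also have "\<dots> = (\<Sum>A\<in>blades. \<Sum>B\<in>blades. \<Sum>F\<in>blades.
      if sym_diff A (sym_diff B F) = D then bsign B F * bsign A (sym_diff B F) * a A * b B * c F else 0)"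
  proof (intro sum.cong refl)
    fix A B F assume "A \<in> blades" "B \<in> blades" "F \<in> blades"
    then have "bsign A B * bsign (sym_diff A B) F = bsign B F * bsign A (sym_diff B F)"
      by (intro bsign_cocycle finite_blade)
    moreover have "sym_diff (sym_diff A B) F = sym_diff A (sym_diff B F)"
      by auto
    ultimately show "(if sym_diff (sym_diff A B) F = D
        then bsign A B * bsign (sym_diff A B) F * a A * b B * c F else 0) =
      (if sym_diff A (sym_diff B F) = D
        then bsign B F * bsign A (sym_diff B F) * a A * b B * c F else 0)"
      by simp
  qed
  also have "\<dots> = (\<Sum>A\<in>blades. \<Sum>G\<in>blades. mmul b c G * k A G)"
    unfolding sum_mmul_mult unfolding k_def by (intro sum.cong refl) simp
  also have "\<dots> = mmul a (mmul b c) D"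
    unfolding mmul_blades[of a "mmul b c"] k_def by (intro sum.cong refl) simp
  finally show "mmul (mmul a b) c D = mmul a (mmul b c) D" .
qed

lemma mmul_lincomb_left:
  "mmul (\<lambda>C. r * a C + s * b C) c = (\<lambda>C. r * mmul a c C + s * mmul b c C)"
  unfolding mmul_blades sum_distrib_left sum.distrib[symmetric]
  by (intro ext sum.cong refl) (simp add: algebra_simps)

lemma mmul_lincomb_right:
  "mmul c (\<lambda>C. r * a C + s * b C) = (\<lambda>C. r * mmul c a C + s * mmul c b C)"
  unfolding mmul_blades sum_distrib_left sum.distrib[symmetric]
  by (intro ext sum.cong refl) (simp add: algebra_simps)

lemma mmul_add_right: "mmul c (madd a b) = madd (mmul c a) (mmul c b)"
  using mmul_lincomb_right[of c 1 a 1 b] by (simp add: madd_def)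

lemma mmul_diff_left: "mmul (msub a b) c = msub (mmul a c) (mmul b c)"
  using mmul_lincomb_left[of 1 a "-1" b c] by (simp add: msub_def)

lemma mmul_diff_right: "mmul c (msub a b) = msub (mmul c a) (mmul c b)"
  using mmul_lincomb_right[of c 1 a "-1" b] by (simp add: msub_def)

lemma mmul_minus_left: "mmul (mneg a) c = mneg (mmul a c)"
  using mmul_lincomb_left[of "-1" a 0 a c] by (simp add: mneg_def)

lemma mmul_minus_right: "mmul c (mneg a) = mneg (mmul c a)"
  using mmul_lincomb_right[of c "-1" a 0 a] by (simp add: mneg_def)

lemma mmul_zero_right: "mmul c mzero = mzero"
  using mmul_lincomb_right[of c 0 c 0 c] by (simp add: mzero_def)

lemma mmul_one_left:
  assumes "blade_supported a" shows "mmul mone a = a"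
proof
  fix C
  have "mmul mone a C = (\<Sum>A\<in>blades. if A = {} then (\<Sum>B\<in>blades. if B = C then a B else 0) else 0)"
    unfolding mmul_blades by (intro sum.cong refl) (simp add: mone_def cong: if_cong)
  also have "\<dots> = a C"
    using assms by (simp add: sum.delta blade_supported_def)
  finally show "mmul mone a C = a C" .
qed

lemma mmul_one_right:
  assumes "blade_supported a" shows "mmul a mone = a"
proof
  fix C
  have "mmul a mone C = (\<Sum>A\<in>blades. \<Sum>B\<in>blades. if B = {} then (if A = C then a A else 0) else 0)"
    unfolding mmul_blades by (intro sum.cong refl) (auto simp: mone_def)
  also have "\<dots> = a C"
    using assms by (simp add: sum.delta blade_supported_def)
  finally show "mmul a mone C = a C" .
qed

lemma mmul_mpow_commute: "blade_supported a \<Longrightarrow> mmul a (mpow a n) = mmul (mpow a n) a"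
  by (induction n) (simp_all add: mmul_one_left mmul_one_right flip: mmul_assoc)

section \<open>Paravectors and their inverses\<close>

definition paravector_blades :: "nat set set" where
  "paravector_blades = {{}, {1}, {2}, {3}}"

lemma paravector_outside: "paravector a \<Longrightarrow> A \<notin> paravector_blades \<Longrightarrow> a A = 0"
  by (simp add: paravector_def paravector_blades_def)

lemma paravector_imp_blade_supported: "paravector a \<Longrightarrow> blade_supported a"
  by (auto simp: paravector_def blade_supported_def blades_def)

lemma sum_blades_eq_sum_paravector_blades:
  "(\<And>A. A \<in> blades - paravector_blades \<Longrightarrow> g A = 0) \<Longrightarrow>
    (\<Sum>A\<in>blades. g A) = (\<Sum>A\<in>paravector_blades. g A)"
  by (intro sum.mono_neutral_right) (auto simp: blades_def paravector_blades_def)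

lemma bsign_singleton: "bsign {i} {j} = (if j \<le> i then -1 else 1)"
proof -
  have "{(i', j'). i' \<in> {i} \<and> j' \<in> {j} \<and> j' < i'} = (if j < i then {(i, j)} else {})"
    by auto
  then show ?thesis
    by (auto simp: bsign_def)
qed

lemma paravector_mmul:
  assumes "paravector a" "paravector b"
  shows "mmul a b C =
    (if C = {} then a {} * b {} - a {1} * b {1} - a {2} * b {2} - a {3} * b {3}
     else if C = {1} then a {} * b {1} + a {1} * b {}
     else if C = {2} then a {} * b {2} + a {2} * b {}
     else if C = {3} then a {} * b {3} + a {3} * b {}
     else if C = {1,2} then a {1} * b {2} - a {2} * b {1}
     else if C = {1,3} then a {1} * b {3} - a {3} * b {1}
     else if C = {2,3} then a {2} * b {3} - a {3} * b {2}
     else 0)"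
proof -
  have "mmul a b C = (\<Sum>A\<in>paravector_blades. \<Sum>B\<in>paravector_blades.
      if sym_diff A B = C then bsign A B * a A * b B else 0)"
    unfolding mmul_blades using assms
    by (intro sum_blades_eq_sum_paravector_blades sum.neutral ballI
        trans[OF sum.cong[OF refl sum_blades_eq_sum_paravector_blades]])
       (auto simp: paravector_outside)
  moreover have "sym_diff {i} {j} = (if i = j then {} else {i, j})" for i j :: nat
    by auto
  ultimately show ?thesis
    by (simp add: paravector_blades_def bsign_singleton insert_commute) (auto simp: algebra_simps)
qed

lemma paravector_pinv: "paravector y \<Longrightarrow> paravector (pinv y)"
  unfolding paravector_def pinv_def pconj_def by auto

lemma pnormsq_nonneg: "pnormsq y \<ge> 0"
  by (simp add: pnormsq_def)

lemma mmul_pconj_right: "paravector y \<Longrightarrow> mmul y (pconj y) = (\<lambda>C. pnormsq y * mone C)"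
  by (intro ext, subst paravector_mmul)
     (auto simp: paravector_def pconj_def mone_def pnormsq_def power2_eq_square doubleton_eq_iff)

lemma mmul_pconj_left: "paravector y \<Longrightarrow> mmul (pconj y) y = (\<lambda>C. pnormsq y * mone C)"
  by (intro ext, subst paravector_mmul)
     (auto simp: paravector_def pconj_def mone_def pnormsq_def power2_eq_square doubleton_eq_iff)

lemma mmul_scale_left: "mmul (\<lambda>C. r * a C) c = (\<lambda>C. r * mmul a c C)"
  using mmul_lincomb_left[of r a 0 a c] by simp

lemma mmul_scale_right: "mmul c (\<lambda>C. r * a C) = (\<lambda>C. r * mmul c a C)"
  using mmul_lincomb_right[of c r a 0 a] by simp

lemma pinv_eq_scaled_pconj: "pinv y = (\<lambda>C. inverse (pnormsq y) * pconj y C)"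
  by (simp add: pinv_def field_simps)

lemma mmul_pinv_right: "paravector y \<Longrightarrow> pnormsq y \<noteq> 0 \<Longrightarrow> mmul y (pinv y) = mone"
  by (simp add: pinv_eq_scaled_pconj mmul_scale_right mmul_pconj_right fun_eq_iff)

lemma mmul_pinv_left: "paravector y \<Longrightarrow> pnormsq y \<noteq> 0 \<Longrightarrow> mmul (pinv y) y = mone"
  by (simp add: pinv_eq_scaled_pconj mmul_scale_left mmul_pconj_left fun_eq_iff)

section \<open>Reversion\<close>

lemma inversions_subsingleton: "A \<subseteq> {i} \<Longrightarrow> inversions A A = 0"
proof -
  assume "A \<subseteq> {i}"
  then have "{(i', j'). i' \<in> A \<and> j' \<in> A \<and> j' < i'} = {}"
    by auto
  then show ?thesis
    unfolding inversions_def by (metis card.empty)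
qed

lemma inversions_doubleton: "i < j \<Longrightarrow> inversions {i, j} {i, j} = 1"
proof -
  assume "i < j"
  then have "{(i', j'). i' \<in> {i, j} \<and> j' \<in> {i, j} \<and> j' < i'} = {(j, i)}"
    by auto
  then show ?thesis
    by (simp add: inversions_def)
qed

lemma inversions_123: "inversions {1, 2, 3} {1, 2, 3} = 3"
proof -
  have "{(i, j). i \<in> {1, 2, 3::nat} \<and> j \<in> {1, 2, 3} \<and> j < i} = {(2, 1), (3, 1), (3, 2)}"
    by auto
  then show ?thesis
    by (simp add: inversions_def)
qed

lemma reversion_sign_paravector_blade: "C \<in> paravector_blades \<Longrightarrow> reversion_sign C = 1"
  by (auto simp: paravector_blades_def reversion_sign_def inversions_subsingleton)

lemma reversion_sign_bivector_trivector: "C \<in> blades - paravector_blades \<Longrightarrow> reversion_sign C = -1"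
proof -
  assume "C \<in> blades - paravector_blades"
  then have "C = {1, 2} \<or> C = {1, 3} \<or> C = {2, 3} \<or> C = {1, 2, 3}"
    by (simp add: blades_def paravector_blades_def Pow_insert insert_commute)
  then show ?thesis
    using inversions_doubleton[of 1 2] inversions_doubleton[of 1 3] inversions_doubleton[of 2 3]
      inversions_123
    by (auto simp: reversion_sign_def)
qed

definition reversion :: "mv \<Rightarrow> mv" where
  "reversion a = (\<lambda>C. reversion_sign C * a C)"

lemma reversion_mmul: "reversion (mmul a b) = mmul (reversion b) (reversion a)"
proof
  fix C
  have "reversion (mmul a b) C = (\<Sum>A\<in>blades. \<Sum>B\<in>blades.
      if sym_diff A B = C then reversion_sign (sym_diff A B) * bsign A B * a A * b B else 0)"
    unfolding reversion_def mmul_blades sum_distrib_left by (intro sum.cong refl) (simp add: mult_ac)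
  also have "\<dots> = (\<Sum>A\<in>blades. \<Sum>B\<in>blades.
      if sym_diff B A = C then bsign B A * (reversion_sign B * b B) * (reversion_sign A * a A) else 0)"
  proof (intro sum.cong refl)
    fix A B assume "A \<in> blades" "B \<in> blades"
    then have "reversion_sign (sym_diff A B) * bsign A B = bsign B A * reversion_sign A * reversion_sign B"
      by (intro reversion_sign_symdiff finite_blade)
    then have "reversion_sign (sym_diff A B) * bsign A B * a A * b B = bsign B A * (reversion_sign B * b B) * (reversion_sign A * a A)"
      by (simp add: mult_ac)
    moreover have "sym_diff B A = sym_diff A B"
      by auto
    ultimately show "(if sym_diff A B = C then reversion_sign (sym_diff A B) * bsign A B * a A * b B else 0) =
      (if sym_diff B A = C then bsign B A * (reversion_sign B * b B) * (reversion_sign A * a A) else 0)"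
      by (simp only:)
  qed
  also have "\<dots> = mmul (reversion b) (reversion a) C"
    unfolding mmul_blades reversion_def by (rule sum.swap)
  finally show "reversion (mmul a b) C = mmul (reversion b) (reversion a) C" .
qed

lemma reversion_paravector: "paravector a \<Longrightarrow> reversion a = a"
  by (intro ext) (metis reversion_def reversion_sign_paravector_blade paravector_outside mult_1 mult_zero_right)

lemma paravector_if_reversion_fixed:
  assumes "blade_supported a" "reversion a = a"
  shows "paravector a"
  unfolding paravector_def
proof (intro allI impI)
  fix C :: "nat set"
  assume "C \<notin> {{}, {1}, {2}, {3}}"
  then show "a C = 0"
    using assms reversion_sign_bivector_trivector[of C]
    by (cases "C \<in> blades") (auto simp: blade_supported_def reversion_def paravector_blades_def fun_eq_iff)
qed

lemma blade_supported_reversion: "blade_supported a \<Longrightarrow> blade_supported (reversion a)"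
  by (simp add: blade_supported_def reversion_def)

lemma reversion_mone: "reversion mone = mone"
  by (rule reversion_paravector) (simp add: paravector_def mone_def)

lemma reversion_mpow: "blade_supported a \<Longrightarrow> reversion (mpow a n) = mpow (reversion a) n"
  by (induction n) (simp_all add: reversion_mone reversion_mmul mmul_mpow_commute blade_supported_reversion)

lemma mmul_mpow_swap:
  assumes "blade_supported u" "blade_supported x"
  shows "mmul u (mpow (mmul x u) n) = mmul (mpow (mmul u x) n) u"
proof (induction n)
  case 0
  then show ?case
    using assms by (simp add: mmul_one_left mmul_one_right)
next
  case (Suc n)
  then show ?case
    by (simp add: mmul_assoc) (simp flip: mmul_assoc)
qed

lemma paravector_palindrome:
  assumes "paravector u" "paravector x"
  shows "paravector (mmul (mpow (mmul u x) n) u)"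
proof (rule paravector_if_reversion_fixed)
  have "reversion (mmul (mpow (mmul u x) n) u) = mmul u (mpow (mmul x u) n)"
    using assms
    by (simp add: reversion_mmul reversion_mpow blade_supported_mmul reversion_paravector)
  also have "\<dots> = mmul (mpow (mmul u x) n) u"
    using assms by (intro mmul_mpow_swap paravector_imp_blade_supported)
  finally show "reversion (mmul (mpow (mmul u x) n) u) = mmul (mpow (mmul u x) n) u" .
qed (rule blade_supported_mmul)

section \<open>Norms\<close>

definition l1norm :: "mv \<Rightarrow> real" where
  "l1norm a = (\<Sum>A\<in>blades. \<bar>a A\<bar>)"

lemma l1norm_nonneg: "l1norm a \<ge> 0"
  by (simp add: l1norm_def sum_nonneg)

lemma abs_le_l1norm: "blade_supported a \<Longrightarrow> \<bar>a C\<bar> \<le> l1norm a"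
  unfolding l1norm_def blade_supported_def
  by (cases "C \<in> blades") (auto intro: member_le_sum sum_nonneg)

lemma l1norm_mmul: "l1norm (mmul a b) \<le> l1norm a * l1norm b"
proof -
  have "l1norm (mmul a b) \<le> (\<Sum>C\<in>blades. \<Sum>A\<in>blades. \<Sum>B\<in>blades.
      \<bar>if sym_diff A B = C then bsign A B * a A * b B else 0\<bar>)"
    unfolding l1norm_def mmul_blades by (intro sum_mono order.trans[OF sum_abs] sum_abs)
  also have "\<dots> = (\<Sum>C\<in>blades. \<Sum>A\<in>blades. \<Sum>B\<in>blades.
      if sym_diff A B = C then \<bar>a A\<bar> * \<bar>b B\<bar> else 0)"
    by (intro sum.cong refl) (simp add: abs_mult bsign_def)
  also have "\<dots> = (\<Sum>A\<in>blades. \<Sum>B\<in>blades. \<Sum>C\<in>blades.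
      if sym_diff A B = C then \<bar>a A\<bar> * \<bar>b B\<bar> else 0)"
    by (subst sum.swap) (rule sum.cong[OF refl], rule sum.swap)
  also have "\<dots> = l1norm a * l1norm b"
    by (simp add: l1norm_def sum_product symdiff_blade)
  finally show ?thesis .
qed

lemma l1norm_mpow: "l1norm (mpow a n) \<le> l1norm a ^ n"
proof (induction n)
  case 0
  show ?case
    by (simp add: l1norm_def mone_def if_distrib sum.delta cong: if_cong)
next
  case (Suc n)
  have "l1norm (mpow a (Suc n)) \<le> l1norm (mpow a n) * l1norm a"
    by (simp add: l1norm_mmul)
  also have "\<dots> \<le> l1norm a ^ n * l1norm a"
    by (rule mult_right_mono[OF Suc l1norm_nonneg])
  finally show ?case
    by (simp add: mult.commute)
qed

definition pnorm :: "mv \<Rightarrow> real" where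
  "pnorm y = sqrt (pnormsq y)"

definition vec4 :: "mv \<Rightarrow> real \<times> real \<times> real \<times> real" where
  "vec4 y = (y {}, y {1}, y {2}, y {3})"

lemma norm_vec4: "norm (vec4 y) = pnorm y"
  by (simp add: vec4_def norm_Pair pnorm_def pnormsq_def add.assoc)

lemma pnorm_nonneg: "pnorm y \<ge> 0"
  by (simp add: pnorm_def pnormsq_nonneg)

lemma pnorm_pos: "pnormsq y \<noteq> 0 \<Longrightarrow> pnorm y > 0"
  using pnormsq_nonneg[of y] by (simp add: pnorm_def)

lemma pnorm_diff_ge: "pnorm (msub y x) \<ge> pnorm y - pnorm x"
  using norm_triangle_ineq2[of "vec4 y" "vec4 x"] by (simp add: norm_vec4[symmetric] vec4_def msub_def)

lemma l1norm_paravector: "paravector y \<Longrightarrow> l1norm y = \<bar>y {}\<bar> + \<bar>y {1}\<bar> + \<bar>y {2}\<bar> + \<bar>y {3}\<bar>"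
  unfolding l1norm_def
  by (subst sum_blades_eq_sum_paravector_blades) (simp_all add: paravector_outside paravector_blades_def add_ac)

lemma l1norm_paravector_le: "paravector y \<Longrightarrow> l1norm y \<le> 2 * pnorm y"
proof -
  assume y: "paravector y"
  have sum4_sq: "(A + B + C + D)\<^sup>2 \<le> 4 * (A\<^sup>2 + B\<^sup>2 + C\<^sup>2 + D\<^sup>2)" for A B C D :: real
  proof -
    have "0 \<le> (A - B)\<^sup>2 + (A - C)\<^sup>2 + (A - D)\<^sup>2 + (B - C)\<^sup>2 + (B - D)\<^sup>2 + (C - D)\<^sup>2"
      by simp
    then show ?thesis
      by (simp add: power2_eq_square algebra_simps)
  qed
  have "l1norm y ^ 2 \<le> 4 * pnormsq y"
    using sum4_sq[of "\<bar>y {}\<bar>" "\<bar>y {1}\<bar>" "\<bar>y {2}\<bar>" "\<bar>y {3}\<bar>"]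
    by (simp add: l1norm_paravector[OF y] pnormsq_def)
  then have "l1norm y \<le> sqrt (4 * pnormsq y)"
    by (rule real_le_rsqrt)
  then show ?thesis
    by (simp add: pnorm_def real_sqrt_mult)
qed

lemma l1norm_pinv:
  assumes "paravector y" "pnormsq y \<noteq> 0"
  shows "l1norm (pinv y) \<le> 2 / pnorm y"
proof -
  have n: "pnormsq y = pnorm y ^ 2" "pnorm y > 0"
    using assms(2) pnorm_pos pnormsq_nonneg[of y] by (auto simp: pnorm_def)
  have "l1norm (pinv y) = l1norm y / pnormsq y"
    unfolding l1norm_paravector[OF paravector_pinv[OF assms(1)]] l1norm_paravector[OF assms(1)]
    by (simp add: pinv_def pconj_def abs_div add_divide_distrib abs_of_nonneg[OF pnormsq_nonneg])
  also have "\<dots> \<le> 2 * pnorm y / pnormsq y"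
    using l1norm_paravector_le[OF assms(1)] n by (intro divide_right_mono) auto
  also have "\<dots> = 2 / pnorm y"
    using n by (simp add: power2_eq_square)
  finally show ?thesis .
qed

section \<open>The summands of the series\<close>

definition zeta_summand :: "nat \<Rightarrow> mv \<Rightarrow> mv \<Rightarrow> mv" where
  "zeta_summand N y x = (\<lambda>C. pinv (msub x y) C +
      (\<Sum>\<mu><N. mmul (mpow (mmul (pinv y) x) \<mu>) (pinv y) C))"

lemma paravector_msub: "paravector x \<Longrightarrow> paravector y \<Longrightarrow> paravector (msub x y)"
  by (simp add: paravector_def msub_def)

lemma pinv_mneg: "pinv (mneg y) = mneg (pinv y)"
  by (rule ext) (simp add: pinv_def pconj_def mneg_def pnormsq_def)

lemma pinv_msub_commute: "pinv (msub x y) = mneg (pinv (msub y x))"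
proof -
  have "pnormsq (msub x y) = pnormsq (msub y x)"
    by (simp add: pnormsq_def msub_def power2_commute)
  moreover have "pconj (msub x y) A = - pconj (msub y x) A" for A
    by (simp add: pconj_def msub_def)
  ultimately show ?thesis
    unfolding pinv_def mneg_def by simp
qed

lemma mmul_geometric_sum_telescoping:
  assumes "blade_supported u" "blade_supported x" "mmul y u = mone"
  shows "mmul (msub y x) (\<lambda>C. \<Sum>\<mu><n. mmul (mpow (mmul u x) \<mu>) u C)
    = msub mone (mmul y (mmul (mpow (mmul u x) n) u))"
proof (induction n)
  case 0
  have "(\<lambda>C. \<Sum>\<mu><0. mmul (mpow (mmul u x) \<mu>) u C) = mzero"
    by (simp add: mzero_def)
  then show ?case
    using assms by (simp add: mmul_zero_right mmul_one_left) (simp add: mzero_def msub_def)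
next
  case (Suc n)
  define a where "a = mmul u x"
  have "mmul y a = x"
    using assms by (simp add: a_def mmul_one_left flip: mmul_assoc)
  moreover have "mmul y (mmul (mpow a (Suc n)) u) = mmul (mmul y a) (mmul (mpow a n) u)"
    using mmul_mpow_commute[OF blade_supported_mmul, of u x n, symmetric]
    by (simp add: mmul_assoc flip: a_def)
  moreover have "(\<lambda>C. \<Sum>\<mu><Suc n. mmul (mpow a \<mu>) u C)
      = madd (\<lambda>C. \<Sum>\<mu><n. mmul (mpow a \<mu>) u C) (mmul (mpow a n) u)"
    by (simp add: madd_def)
  ultimately show ?case
    using Suc unfolding a_def[symmetric]
    by (simp add: mmul_add_right mmul_diff_left) (simp add: madd_def msub_def fun_eq_iff)
qed

lemma zeta_summand_telescoping:
  assumes x: "paravector x" and y: "paravector y"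
    and "pnormsq y \<noteq> 0" "pnormsq (msub y x) \<noteq> 0"
  shows "zeta_summand N y x =
    mneg (mmul (pinv (msub y x)) (mmul y (mmul (mpow (mmul (pinv y) x) N) (pinv y))))"
proof -
  define S where "S = (\<lambda>C. \<Sum>\<mu><N. mmul (mpow (mmul (pinv y) x) \<mu>) (pinv y) C)"
  have d: "paravector (msub y x)"
    by (rule paravector_msub[OF y x])
  have "S = mmul (pinv (msub y x)) (mmul (msub y x) S)"
    using assms d by (simp add: mmul_pinv_left mmul_one_left S_def blade_supported_def
        mmul_outside_blades flip: mmul_assoc)
  also have "\<dots> = msub (pinv (msub y x))
      (mmul (pinv (msub y x)) (mmul y (mmul (mpow (mmul (pinv y) x) N) (pinv y))))"
    using assms d unfolding S_def
    by (simp add: mmul_geometric_sum_telescoping paravector_imp_blade_supported paravector_pinv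
        mmul_pinv_right mmul_diff_right mmul_one_right)
  finally have "S = \<dots>" .
  then show ?thesis
    unfolding zeta_summand_def pinv_msub_commute[of x y]
    by (simp add: S_def fun_eq_iff mneg_def msub_def)
qed

lemma zeta_summand_bound:
  assumes x: "paravector x" and y: "paravector y" and "pnormsq y \<noteq> 0"
    and far: "2 * pnorm x \<le> pnorm y"
  shows "\<bar>zeta_summand N y x C\<bar> \<le> 16 * (4 * pnorm x) ^ N / pnorm y ^ (N + 1)"
proof -
  define a where "a = mmul (pinv y) x"
  define d where "d = msub y x"
  define M where "M = mmul (pinv d) (mmul y (mmul (mpow a N) (pinv y)))"
  have py: "pnorm y > 0"
    using assms(3) by (rule pnorm_pos)
  have d: "paravector d" "pnorm y / 2 \<le> pnorm d"
    using paravector_msub[OF y x] pnorm_diff_ge[of y x] far by (auto simp: d_def)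
  then have "pnormsq d \<noteq> 0"
    using py by (auto simp: pnorm_def)
  then have M: "zeta_summand N y x = mneg M"
    unfolding M_def a_def d_def using assms by (intro zeta_summand_telescoping) (auto simp: d_def)
  have "l1norm (pinv d) \<le> 2 / pnorm d"
    using d(1) \<open>pnormsq d \<noteq> 0\<close> by (rule l1norm_pinv)
  also have "\<dots> \<le> 4 / pnorm y"
    using d(2) py by (simp add: field_simps)
  finally have b1: "l1norm (pinv d) \<le> 4 / pnorm y" .
  have b2: "l1norm (pinv y) \<le> 2 / pnorm y"
    using y assms(3) by (rule l1norm_pinv)
  have "l1norm a \<le> (2 / pnorm y) * (2 * pnorm x)"
    unfolding a_def using b2 l1norm_paravector_le[OF x] py
    by (intro order.trans[OF l1norm_mmul] mult_mono) (auto simp: l1norm_nonneg)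
  then have b3: "l1norm (mpow a N) \<le> (4 * pnorm x / pnorm y) ^ N"
    by (intro order.trans[OF l1norm_mpow] power_mono) (auto simp: l1norm_nonneg)
  have "l1norm M \<le> l1norm (pinv d) * (l1norm y * (l1norm (mpow a N) * l1norm (pinv y)))"
    unfolding M_def
    by (intro order.trans[OF l1norm_mmul] mult_left_mono l1norm_mmul l1norm_nonneg)
  also have "\<dots> \<le> (4 / pnorm y) * ((2 * pnorm y) * ((4 * pnorm x / pnorm y) ^ N * (2 / pnorm y)))"
    using py b1 b2 b3 l1norm_paravector_le[OF y] pnorm_nonneg[of x]
    by (intro mult_mono mult_nonneg_nonneg l1norm_nonneg) auto
  also have "\<dots> = 16 * (4 * pnorm x) ^ N / pnorm y ^ (N + 1)"
    using py by (simp add: power_divide field_simps)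
  finally have "l1norm M \<le> 16 * (4 * pnorm x) ^ N / pnorm y ^ (N + 1)" .
  moreover have "\<bar>M C\<bar> \<le> l1norm M"
    unfolding M_def by (intro abs_le_l1norm blade_supported_mmul)
  ultimately show ?thesis
    by (simp add: M mneg_def)
qed

lemma paravector_zeta_summand:
  assumes "paravector x" "paravector y"
  shows "paravector (zeta_summand N y x)"
  using paravector_pinv[OF paravector_msub[OF assms]] paravector_palindrome[OF paravector_pinv assms(1)]
    assms(2)
  by (simp add: paravector_def zeta_summand_def)

lemma zeta_summand_minus: "zeta_summand N (mneg y) (mneg x) = mneg (zeta_summand N y x)"
proof -
  have "msub (mneg x) (mneg y) = mneg (msub x y)"
    by (simp add: msub_def mneg_def)
  moreover have "mmul (mneg (pinv y)) (mneg x) = mmul (pinv y) x"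
    by (simp add: mmul_minus_left mmul_minus_right) (simp add: mneg_def)
  ultimately show ?thesis
    by (simp add: zeta_summand_def pinv_mneg mmul_minus_right) (simp add: mneg_def sum_negf)
qed

section \<open>Lattice sums\<close>

definition mv_independent :: "nat \<Rightarrow> (nat \<Rightarrow> mv) \<Rightarrow> bool" where
  "mv_independent N \<omega> \<longleftrightarrow> (\<forall>c :: nat \<Rightarrow> real. (\<forall>C. (\<Sum>\<alpha>\<in>{1..N}. c \<alpha> * \<omega> \<alpha> C) = 0)
     \<longrightarrow> (\<forall>\<alpha>\<in>{1..N}. c \<alpha> = 0))"

definition lcomb :: "nat \<Rightarrow> (nat \<Rightarrow> mv) \<Rightarrow> (nat \<Rightarrow> real) \<Rightarrow> mv" where
  "lcomb N \<omega> c = (\<lambda>C. \<Sum>\<alpha>\<in>{1..N}. c \<alpha> * \<omega> \<alpha> C)"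

text \<open>Coefficient vectors of length N \<le> 4 are embedded in R^4 so that the lower bound for
  injective linear maps (\<open>injective_imp_isometric\<close>) applies.\<close>

type_synonym real4 = "real \<times> real \<times> real \<times> real"

definition coord4 :: "real4 \<Rightarrow> nat \<Rightarrow> real" where
  "coord4 v \<alpha> = (case v of (a, b, c, d) \<Rightarrow>
     if \<alpha> = 1 then a else if \<alpha> = 2 then b else if \<alpha> = 3 then c else if \<alpha> = 4 then d else 0)"

definition tuple4 :: "(nat \<Rightarrow> real) \<Rightarrow> real4" where
  "tuple4 c = (c 1, c 2, c 3, c 4)"

lemma linear_coord4: "coord4 (u + v) \<alpha> = coord4 u \<alpha> + coord4 v \<alpha>" "coord4 (r *\<^sub>R v) \<alpha> = r * coord4 v \<alpha>"
  by (cases u, cases v, simp add: coord4_def)+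

lemma coord4_tuple4: "\<alpha> \<in> {1..4} \<Longrightarrow> coord4 (tuple4 c) \<alpha> = c \<alpha>"
proof -
  assume "\<alpha> \<in> {1..4}"
  then have "\<alpha> = 1 \<or> \<alpha> = 2 \<or> \<alpha> = 3 \<or> \<alpha> = 4"
    by auto
  then show ?thesis
    by (auto simp: coord4_def tuple4_def)
qed

lemma coord4_zero: "coord4 0 \<alpha> = 0"
  by (simp add: coord4_def zero_prod_def)

lemma coord4_eq_0_iff: "(\<forall>\<alpha>\<in>{1..4}. coord4 v \<alpha> = 0) \<longleftrightarrow> v = 0"
proof -
  obtain a b c d where v: "v = (a, b, c, d)"
    by (cases v) auto
  have "{1..4::nat} = {1, 2, 3, 4}"
    by auto
  then show ?thesis
    by (simp add: v coord4_def zero_prod_def)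
qed

lemma abs_coord4_le_norm: "\<bar>coord4 v \<alpha>\<bar> \<le> norm v"
proof -
  obtain a b c d where v: "v = (a, b, c, d)"
    by (cases v) auto
  show ?thesis
    unfolding v coord4_def norm_Pair by (auto intro!: real_le_rsqrt)
qed

lemma paravector_lcomb: "\<forall>\<alpha>\<in>{1..N}. paravector (\<omega> \<alpha>) \<Longrightarrow> paravector (lcomb N \<omega> c)"
  by (simp add: paravector_def lcomb_def)

lemma paravector_eq_0_iff:
  assumes "paravector y"
  shows "vec4 y = 0 \<longleftrightarrow> y = mzero"
proof
  assume "vec4 y = 0"
  then have "y A = 0" if "A \<in> {{}, {1}, {2}, {3}}" for A
    using that by (auto simp: vec4_def zero_prod_def)
  then show "y = mzero"
    using assms unfolding paravector_def mzero_def by blast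
qed (simp add: vec4_def mzero_def zero_prod_def)

lemma lcomb_coeff_bound:
  assumes "N \<le> 4"
    and paravectors: "\<forall>\<alpha>\<in>{1..N}. paravector (\<omega> \<alpha>)"
    and independent: "mv_independent N \<omega>"
  shows "\<exists>e>0. \<forall>c. \<forall>\<alpha>\<in>{1..N}. e * \<bar>c \<alpha>\<bar> \<le> pnorm (lcomb N \<omega> c)"
proof -
  define S where "S = {v. \<forall>\<alpha>\<in>{1..4}. N < \<alpha> \<longrightarrow> coord4 v \<alpha> = 0}"
  define f where "f v = vec4 (lcomb N \<omega> (coord4 v))" for v
  have "linear f"
    by (intro linearI) (simp_all add: f_def vec4_def lcomb_def linear_coord4 algebra_simps
        sum.distrib sum_distrib_left)
  moreover have "subspace S"
    by (auto simp: subspace_def S_def linear_coord4 coord4_zero)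
  moreover have "v = 0" if "v \<in> S" "f v = 0" for v
  proof -
    have "lcomb N \<omega> (coord4 v) = mzero"
      using that(2) paravector_eq_0_iff[OF paravector_lcomb[OF paravectors]] by (simp add: f_def)
    then have "\<forall>\<alpha>\<in>{1..N}. coord4 v \<alpha> = 0"
      using independent by (simp add: mv_independent_def lcomb_def mzero_def fun_eq_iff)
    then show "v = 0"
      using that(1) by (auto simp: S_def simp flip: coord4_eq_0_iff)
  qed
  ultimately obtain e where e: "e > 0" "\<forall>v\<in>S. e * norm v \<le> norm (f v)"
    using injective_imp_isometric[of S f] closed_subspace[of S] linear_conv_bounded_linear[of f]
    by auto
  have "e * \<bar>c \<alpha>\<bar> \<le> pnorm (lcomb N \<omega> c)" if "\<alpha> \<in> {1..N}" for c \<alpha>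
  proof -
    define v where "v = tuple4 (\<lambda>\<beta>. if \<beta> \<le> N then c \<beta> else 0)"
    have coord: "coord4 v \<beta> = c \<beta>" if "\<beta> \<in> {1..N}" for \<beta>
      using that \<open>N \<le> 4\<close> by (simp add: v_def coord4_tuple4)
    have "v \<in> S"
      by (simp add: S_def v_def coord4_tuple4)
    have "e * \<bar>c \<alpha>\<bar> \<le> e * norm v"
      using e(1) abs_coord4_le_norm[of v \<alpha>] coord[OF that] by simp
    also have "\<dots> \<le> norm (f v)"
      using e(2) \<open>v \<in> S\<close> by blast
    also have "f v = vec4 (lcomb N \<omega> c)"
      by (simp add: f_def lcomb_def coord)
    finally show ?thesis
      by (simp add: norm_vec4)
  qed
  then show ?thesis
    using e(1) by blast
qed

lemma summable_on_one_plus_abs_powr: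
  assumes "s > 1"
  shows "(\<lambda>j::int. (1 + \<bar>real_of_int j\<bar>) powr - s) summable_on UNIV"
proof -
  have "summable (\<lambda>n. real (Suc n) powr - s)"
    using assms by (subst summable_Suc_iff) (simp add: summable_real_powr_iff)
  then have nat: "(\<lambda>n::nat. (1 + real n) powr - s) summable_on UNIV"
    by (simp add: summable_on_UNIV_nonneg_real_iff add.commute)
  have "(\<lambda>j::int. (1 + \<bar>real_of_int j\<bar>) powr - s) summable_on (int ` UNIV \<union> (\<lambda>n. - int n) ` UNIV)"
    using nat by (intro summable_on_union) (simp_all add: summable_on_reindex inj_on_def comp_def)
  moreover have "int ` UNIV \<union> (\<lambda>n. - int n) ` UNIV = UNIV"
    by (auto intro: int_cases2)
  ultimately show ?thesis
    by simp
qed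

lemma summable_on_prod_PiE_nonneg:
  fixes g :: "'b \<Rightarrow> real"
  assumes "finite A" "countable B" "g summable_on B" "\<And>j. g j \<ge> 0"
  shows "(\<lambda>k. \<Prod>\<alpha>\<in>A. g (k \<alpha>)) summable_on PiE A (\<lambda>_. B)"
proof -
  have "Infinite_Sum.abs_summable_on (\<lambda>k. \<Prod>\<alpha>\<in>A. g (k \<alpha>)) (PiE A (\<lambda>_. B))"
    unfolding abs_summable_equivalent using assms
    by (intro abs_summable_on_prod_PiE[where f = "\<lambda>_. g"]) (auto simp flip: abs_summable_equivalent)
  then show ?thesis
    using assms(4) by (simp add: prod_nonneg)
qed

definition lattice_point :: "nat \<Rightarrow> (nat \<Rightarrow> mv) \<Rightarrow> (nat \<Rightarrow> int) \<Rightarrow> mv" where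
  "lattice_point N \<omega> k = lcomb N \<omega> (\<lambda>\<alpha>. 2 * of_int (k \<alpha>))"

lemma lattice_eq_image: "lattice N \<omega> = lattice_point N \<omega> ` PiE {1..N} (\<lambda>_. UNIV)"
proof
  show "lattice N \<omega> \<subseteq> lattice_point N \<omega> ` PiE {1..N} (\<lambda>_. UNIV)"
  proof
    fix y assume "y \<in> lattice N \<omega>"
    then obtain k where "y = lattice_point N \<omega> k"
      by (auto simp: lattice_def lattice_point_def lcomb_def)
    also have "\<dots> = lattice_point N \<omega> (restrict k {1..N})"
      by (simp add: lattice_point_def lcomb_def)
    finally have "y = lattice_point N \<omega> (restrict k {1..N})" .
    then show "y \<in> lattice_point N \<omega> ` PiE {1..N} (\<lambda>_. UNIV)"
      by (intro rev_image_eqI[of "restrict k {1..N}"]) simp_all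
  qed
next
  show "lattice_point N \<omega> ` PiE {1..N} (\<lambda>_. UNIV) \<subseteq> lattice N \<omega>"
    unfolding lattice_def lattice_point_def lcomb_def by blast
qed

lemma inj_on_lattice_point:
  assumes independent: "mv_independent N \<omega>"
  shows "inj_on (lattice_point N \<omega>) (PiE {1..N} (\<lambda>_. UNIV))"
proof (rule inj_onI)
  fix k l assume kl: "k \<in> PiE {1..N} (\<lambda>_. UNIV)" "l \<in> PiE {1..N} (\<lambda>_. UNIV)"
    and "lattice_point N \<omega> k = lattice_point N \<omega> l"
  then have "\<forall>C. (\<Sum>\<alpha>\<in>{1..N}. (2 * of_int (k \<alpha> - l \<alpha>)) * \<omega> \<alpha> C) = 0"
    by (simp add: lattice_point_def lcomb_def fun_eq_iff algebra_simps sum_subtractf)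
  then have "\<forall>\<alpha>\<in>{1..N}. k \<alpha> = l \<alpha>"
    using independent unfolding mv_independent_def by fastforce
  then show "k = l"
    using kl by (auto intro: PiE_ext)
qed

lemma lattice_point_eq_zero: "(\<forall>\<alpha>\<in>{1..N}. k \<alpha> = 0) \<Longrightarrow> lattice_point N \<omega> k = mzero"
  by (simp add: lattice_point_def lcomb_def mzero_def)

lemma inverse_power_lattice_point_le:
  assumes e: "e > 0" "\<And>c \<alpha>. \<alpha> \<in> {1..N} \<Longrightarrow> e * \<bar>c \<alpha>\<bar> \<le> pnorm (lcomb N \<omega> c)"
    and s: "s \<ge> 0" "real N * s = real m" and "m > 0"
  shows "1 / pnorm (lattice_point N \<omega> k) ^ m
    \<le> (1 / e) ^ m * (\<Prod>\<alpha>\<in>{1..N}. (1 + \<bar>real_of_int (k \<alpha>)\<bar>) powr - s)"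
proof (cases "pnorm (lattice_point N \<omega> k) = 0")
  case True
  \<comment> \<open>only when k vanishes on {1..N}; the left-hand side is the junk value 1 / 0 = 0\<close>
  then show ?thesis
    using e(1) \<open>m > 0\<close> by (simp add: prod_nonneg power_0_left)
next
  case False
  define P where "P = pnorm (lattice_point N \<omega> k)"
  have P: "P > 0"
    using False pnorm_nonneg[of "lattice_point N \<omega> k"] by (simp add: P_def)
  have coeff: "2 * e * \<bar>real_of_int (k \<alpha>)\<bar> \<le> P" if "\<alpha> \<in> {1..N}" for \<alpha>
    using e(2)[OF that, of "\<lambda>\<alpha>. 2 * of_int (k \<alpha>)"] by (simp add: P_def lattice_point_def abs_mult)
  have "lattice_point N \<omega> k \<noteq> mzero"
    using False by (auto simp: pnorm_def pnormsq_def mzero_def)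
  then obtain \<beta> where "\<beta> \<in> {1..N}" "k \<beta> \<noteq> 0"
    using lattice_point_eq_zero[of N k \<omega>] by blast
  then have "1 \<le> \<bar>real_of_int (k \<beta>)\<bar>"
    by (metis of_int_1_le_iff of_int_abs zero_less_abs_iff int_one_le_iff_zero_less)
  then have "2 * e \<le> P"
    using coeff[OF \<open>\<beta> \<in> {1..N}\<close>] e(1) mult_left_mono[of 1 "\<bar>real_of_int (k \<beta>)\<bar>" "2 * e"]
    by linarith
  then have le: "1 + \<bar>real_of_int (k \<alpha>)\<bar> \<le> P / e" if "\<alpha> \<in> {1..N}" for \<alpha>
    using coeff[OF that] e(1) by (simp add: field_simps)
  have "inverse ((P / e) ^ m) = (P / e) powr (real N * - s)"
    using P e(1) s(2) by (simp add: powr_minus powr_realpow)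
  also have "\<dots> = ((P / e) powr - s) ^ N"
    using P e(1) by (intro powr_power[symmetric]) auto
  also have "\<dots> \<le> (\<Prod>\<alpha>\<in>{1..N}. (1 + \<bar>real_of_int (k \<alpha>)\<bar>) powr - s)"
    using prod_mono[of "{1..N}" "\<lambda>_. (P / e) powr - s"] le s(1) by (simp add: powr_mono2')
  finally show ?thesis
    using e(1) by (simp add: P_def power_divide field_simps)
qed

lemma lattice_summable_inverse_power:
  assumes N: "N \<in> {1..4}"
    and paravectors: "\<forall>\<alpha>\<in>{1..N}. paravector (\<omega> \<alpha>)"
    and independent: "mv_independent N \<omega>"
    and "N < m"
  shows "(\<lambda>y. 1 / pnorm y ^ m) summable_on (lattice N \<omega> - {mzero})"
proof -
  obtain e where e: "e > 0" "\<And>c \<alpha>. \<alpha> \<in> {1..N} \<Longrightarrow> e * \<bar>c \<alpha>\<bar> \<le> pnorm (lcomb N \<omega> c)"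
    using lcomb_coeff_bound[OF _ paravectors independent] N by auto
  \<comment> \<open>the exponent m is shared out as s = m / N > 1 to each of the N coordinates\<close>
  define s where "s = real m / real N"
  have s: "s > 1" "real N * s = real m"
    using N \<open>N < m\<close> by (auto simp: s_def)
  have "(\<lambda>k. (1 / e) ^ m * (\<Prod>\<alpha>\<in>{1..N}. (1 + \<bar>real_of_int (k \<alpha>)\<bar>) powr - s))
      summable_on PiE {1..N} (\<lambda>_. UNIV)"
    using summable_on_one_plus_abs_powr[OF s(1)]
    by (intro summable_on_cmult_right summable_on_prod_PiE_nonneg) auto
  moreover have "1 / pnorm (lattice_point N \<omega> k) ^ m
      \<le> (1 / e) ^ m * (\<Prod>\<alpha>\<in>{1..N}. (1 + \<bar>real_of_int (k \<alpha>)\<bar>) powr - s)" for k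
    using inverse_power_lattice_point_le[OF e(1) e(2) _ s(2)] s(1) \<open>N < m\<close> by simp
  ultimately have "(\<lambda>k. 1 / pnorm (lattice_point N \<omega> k) ^ m) summable_on PiE {1..N} (\<lambda>_. UNIV)"
    by (rule summable_on_comparison_test) (simp add: pnorm_nonneg)
  then have "(\<lambda>y. 1 / pnorm y ^ m) summable_on lattice N \<omega>"
    unfolding lattice_eq_image
    using summable_on_reindex[OF inj_on_lattice_point[OF independent], of "\<lambda>y. 1 / pnorm y ^ m"]
    by (simp add: comp_def)
  then show ?thesis
    by (rule summable_on_subset) blast
qed

section \<open>Convergence, paravector values and oddness\<close>

lemma sums_reindex_bij:
  fixes f :: "nat \<Rightarrow> real"
  assumes "summable (\<lambda>p. \<bar>f p\<bar>)" "bij \<sigma>"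
  shows "(\<lambda>p. f (\<sigma> p)) sums (\<Sum>p. f p)"
proof -
  have "(f has_sum (\<Sum>p. f p)) UNIV"
    using assms(1) by (intro norm_summable_imp_has_sum summable_sums) (auto intro: summable_rabs_cancel)
  then have "((\<lambda>p. f (\<sigma> p)) has_sum (\<Sum>p. f p)) UNIV"
    using has_sum_reindex_bij_betw[OF assms(2)] by blast
  then show ?thesis
    by (rule has_sum_imp_sums)
qed

lemma negation_permutation:
  assumes W: "bij_betw W UNIV S" and S: "\<And>y. y \<in> S \<Longrightarrow> mneg y \<in> S"
  obtains \<sigma> where "bij \<sigma>" "\<And>p. W (\<sigma> p) = mneg (W p)"
proof
  define \<sigma> where "\<sigma> p = inv_into UNIV W (mneg (W p))" for p
  show W\<sigma>: "W (\<sigma> p) = mneg (W p)" for p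
    unfolding \<sigma>_def using W S by (auto intro: bij_betw_inv_into_right simp: bij_betw_def)
  have "\<sigma> (\<sigma> p) = p" for p
    using W\<sigma>[of "\<sigma> p"] W\<sigma>[of p] W by (simp add: mneg_def bij_betw_def inj_def)
  then show "bij \<sigma>"
    by (metis bijI injI surjI)
qed

lemma mneg_lattice: "y \<in> lattice N \<omega> \<Longrightarrow> mneg y \<in> lattice N \<omega>"
proof -
  assume "y \<in> lattice N \<omega>"
  then obtain k where "y = (\<lambda>C. \<Sum>\<alpha>\<in>{1..N}. 2 * of_int (k \<alpha>) * \<omega> \<alpha> C)"
    by (auto simp: lattice_def)
  then have "mneg y = (\<lambda>C. \<Sum>\<alpha>\<in>{1..N}. 2 * of_int (- k \<alpha>) * \<omega> \<alpha> C)"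
    by (simp add: mneg_def sum_negf)
  then show ?thesis
    unfolding lattice_def by (intro CollectI exI[of _ "\<lambda>\<alpha>. - k \<alpha>"]) simp
qed

lemma mneg_eq_mzero_iff: "mneg y = mzero \<longleftrightarrow> y = mzero"
  by (auto simp: mneg_def mzero_def fun_eq_iff)

locale lattice_enumeration =
  fixes N :: nat and \<omega> :: "nat \<Rightarrow> mv" and W :: "nat \<Rightarrow> mv"
  assumes rank: "N \<in> {1..4}"
    and paravectors: "\<forall>\<alpha>\<in>{1..N}. paravector (\<omega> \<alpha>)"
    and independent: "mv_independent N \<omega>"
    and enumeration: "bij_betw W UNIV (lattice N \<omega> - {mzero})"
begin

lemma paravector_enumeration: "paravector (W p)"
proof -
  have "W p \<in> lattice N \<omega>"
    using enumeration by (auto simp: bij_betw_def)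
  then show ?thesis
    using paravector_lcomb[OF paravectors] by (auto simp: lattice_eq_image lattice_point_def)
qed

lemma pnormsq_enumeration: "pnormsq (W p) \<noteq> 0"
proof
  assume "pnormsq (W p) = 0"
  then have "norm (vec4 (W p)) = 0"
    by (simp add: norm_vec4 pnorm_def)
  then have "vec4 (W p) = 0"
    by simp
  then have "W p = mzero"
    using paravector_eq_0_iff[OF paravector_enumeration] by blast
  then show False
    using enumeration by (auto simp: bij_betw_def)
qed

lemma summable_inverse_power_enumeration: "summable (\<lambda>p. 1 / pnorm (W p) ^ (N + 1))"
proof -
  have "(\<lambda>y. 1 / pnorm y ^ (N + 1)) summable_on (lattice N \<omega> - {mzero})"
    using rank paravectors independent by (rule lattice_summable_inverse_power) simp
  then have "(\<lambda>p. 1 / pnorm (W p) ^ (N + 1)) summable_on UNIV"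
    using summable_on_reindex_bij_betw[OF enumeration, of "\<lambda>y. 1 / pnorm y ^ (N + 1)"] by simp
  then show ?thesis
    by (simp add: summable_on_UNIV_nonneg_real_iff pnorm_nonneg)
qed

lemma eventually_pnorm_enumeration_ge: "eventually (\<lambda>p. R \<le> pnorm (W p)) sequentially"
proof -
  define R' where "R' = max R 1"
  have "eventually (\<lambda>p. 1 / pnorm (W p) ^ (N + 1) < 1 / R' ^ (N + 1)) sequentially"
    using summable_LIMSEQ_zero[OF summable_inverse_power_enumeration]
    by (rule order_tendstoD) (simp add: R'_def)
  then show ?thesis
  proof (rule eventually_mono)
    fix p
    assume "1 / pnorm (W p) ^ (N + 1) < 1 / R' ^ (N + 1)"
    moreover have "pnorm (W p) > 0"
      by (rule pnorm_pos[OF pnormsq_enumeration])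
    ultimately have "R' ^ (N + 1) < pnorm (W p) ^ (N + 1)"
      using inverse_less_iff_less[of "pnorm (W p) ^ (N + 1)" "R' ^ (N + 1)"]
      by (simp add: R'_def inverse_eq_divide)
    then have "R' < pnorm (W p)"
      using pnorm_nonneg by (rule power_less_imp_less_base)
    then show "R \<le> pnorm (W p)"
      by (simp add: R'_def)
  qed
qed

lemma summable_abs_zeta_summands:
  assumes "paravector x"
  shows "summable (\<lambda>p. \<bar>zeta_summand N (W p) x C\<bar>)"
proof (rule summable_comparison_test_ev)
  show "summable (\<lambda>p. 16 * (4 * pnorm x) ^ N * (1 / pnorm (W p) ^ (N + 1)))"
    by (intro summable_mult summable_inverse_power_enumeration)
  show "eventually (\<lambda>p. norm \<bar>zeta_summand N (W p) x C\<bar>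
      \<le> 16 * (4 * pnorm x) ^ N * (1 / pnorm (W p) ^ (N + 1))) sequentially"
    using eventually_pnorm_enumeration_ge[of "2 * pnorm x"]
    by eventually_elim
       (use zeta_summand_bound[OF assms paravector_enumeration pnormsq_enumeration] in simp)
qed

lemma zeta_series_minus:
  assumes "paravector x"
  shows "(\<Sum>p. zeta_summand N (W p) (mneg x) C) = - (\<Sum>p. zeta_summand N (W p) x C)"
proof -
  obtain \<sigma> where \<sigma>: "bij \<sigma>" "\<And>p. W (\<sigma> p) = mneg (W p)"
    using enumeration by (rule negation_permutation) (auto simp: mneg_lattice mneg_eq_mzero_iff)
  have "zeta_summand N (W p) (mneg x) C = - zeta_summand N (W (\<sigma> p)) x C" for p
    using zeta_summand_minus[of N "W (\<sigma> p)" x] by (simp add: \<sigma>(2) mneg_def)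
  moreover have "(\<lambda>p. zeta_summand N (W (\<sigma> p)) x C) sums (\<Sum>p. zeta_summand N (W p) x C)"
    using summable_abs_zeta_summands[OF assms] \<sigma>(1) by (rule sums_reindex_bij)
  ultimately show ?thesis
    by (simp add: sums_iff suminf_minus)
qed

end

theorem mainTheorem6:
  fixes N :: nat and \<omega> :: "nat \<Rightarrow> mv" and w :: "nat \<Rightarrow> mv"
  assumes "N \<in> {1..4}"
    and "\<forall>\<alpha>\<in>{1..N}. paravector (\<omega> \<alpha>)"
    and "\<forall>c :: nat \<Rightarrow> real. (\<forall>C. (\<Sum>\<alpha>\<in>{1..N}. c \<alpha> * \<omega> \<alpha> C) = 0)
           \<longrightarrow> (\<forall>\<alpha>\<in>{1..N}. c \<alpha> = 0)"
    and "bij_betw w {1..} (lattice N \<omega> - {mzero})"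
  shows "\<forall>x. paravector x \<and> x \<notin> lattice N \<omega> \<longrightarrow>
           (\<forall>C. summable (\<lambda>p. zterm N w x (Suc p) C))
         \<and> paravector (zeta N w x)
         \<and> zeta N w (mneg x) = mneg (zeta N w x)"
proof (intro allI impI conjI)
  fix x assume "paravector x \<and> x \<notin> lattice N \<omega>"
  then have x: "paravector x" ..
  have "bij_betw Suc UNIV {1..}"
    by (simp add: atLeast_Suc_greaterThan greaterThan_0)
  then have "bij_betw (w \<circ> Suc) UNIV (lattice N \<omega> - {mzero})"
    using assms(4) by (rule bij_betw_trans)
  moreover have "mv_independent N \<omega>"
    using assms(3) by (simp add: mv_independent_def)
  ultimately interpret lattice_enumeration N \<omega> "w \<circ> Suc"
    using assms(1,2) by (simp add: lattice_enumeration_def)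
  have zterm: "zterm N w y (Suc p) = zeta_summand N ((w \<circ> Suc) p) y" for y p
    by (simp add: zterm_def zeta_summand_def)
  then have zeta: "zeta N w y C = pinv y C + (\<Sum>p. zeta_summand N ((w \<circ> Suc) p) y C)" for y C
    by (simp add: zeta_def)
  show "summable (\<lambda>p. zterm N w x (Suc p) C)" for C
    using summable_abs_zeta_summands[OF x] by (simp add: zterm summable_rabs_cancel)
  show "paravector (zeta N w x)"
    using paravector_pinv[OF x] paravector_zeta_summand[OF x paravector_enumeration]
    by (simp add: paravector_def zeta)
  show "zeta N w (mneg x) = mneg (zeta N w x)"
    using zeta_series_minus[OF x] by (simp add: fun_eq_iff zeta pinv_mneg) (simp add: mneg_def zeta)
qed

end
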